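(* Assume the standing setting with (H1), (H2), (P), let $\delta>0$ be the constant of Lemma 3.4 (so that for every hyperbolic time $n$ of $x$, $f^n$ maps $B(x,n,\delta)$ homeomorphically onto $B(f^n(x),\delta)$ with $d(f^{n-j}y,f^{n-j}z)\le e^{-cj/2}d(f^ny,f^nz)$ for $1\le j\le n$), let $\lambda\ge e^{h(f)+\inf\phi}$ be an eigenvalue of $\mathcal L_\phi^*$, $\nu$ a probability with $\mathcal L_\phi^*\nu=\lambda\nu$, and $P=\log\lambda$. Then there exists $K>0$ such that, if $n$ is a hyperbolic time for $x\in\operatorname{supp}(\nu)$, then $K^{-1}\le \nu(B(x,n,\delta))/e^{-Pn+S_n\phi(y)}\le K$ for every $y\in B(x,n,\delta)$.
   Context: Standing setting. $(M,d)$ is a compact metric space of dimension $m$ in which the Besicovitch covering lemma holds. $f:M\to M$ is a local homeomorphism such that every point has finitely many preimages, each set $\{x:\#f^{-1}(x)=k\}$ is closed, and there is a bounded function $L:M\to(0,\infty)$ such that every $x\in M$ has a neighbourhood $U_x$ on which $f$ is injective and $d(f_x^{-1}(y),f_x^{-1}(z))\le L(x)\,d(y,z)$ for all $y,z\in f(U_x)$, where $f_x^{-1}$ is the inverse of $f|_{U_x}$. Let $h(f)=\liminf_{n\to\infty}\frac1n\log\min_{x\in M}\#f^{-n}(x)$; it is assumed that every point of $M$ has at least $e^{h(f)}$ preimages. $\phi:M\to\mathbb R$ is Hölder continuous. Hypotheses: (H2) there is a cover $\mathcal P=\{P_1,\dots,P_{k_0}\}$ of $M$ by sets on which $f$ is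 injective and an open set $\mathcal A\subset P_1\cup\dots\cup P_q$ for some integer $q<e^{h(f)}$. (P) $\sup\phi-\inf\phi<h(f)-\log q$. For $\gamma\in(0,1)$ let $I(\gamma,n)$ be the set of $(i_0,\dots,i_{n-1})\in\{1,\dots,k_0\}^n$ with $\#\{0\le j\le n-1: i_j\le q\}>\gamma n$ and $c_\gamma=\limsup_n\frac1n\log\#I(\gamma,n)$. Fix $\varepsilon_0>0$ with $\sup\phi-\inf\phi+\varepsilon_0<h(f)-\log q$ and $\gamma\in(0,1)$ with $c_\gamma<\log q+\varepsilon_0/4$. (H1) there are constants $\sigma>1$, $L>0$, $c>0$ with $L(x)\le L$ for $x\in\mathcal A$, $L(x)\le\sigma^{-1}$ for $x\in M\setminus\mathcal A$, $\sigma^{-(1-\gamma)}L^\gamma<e^{-2c}<1$, and $\sup\phi-\inf\phi<h(f)-\log q-\varepsilon_0-m\log L$. $\mathcal L_\phi g(x)=\sum_{f(y)=x}e^{\phi(y)}g(y)$ with dual $\mathcal L_\phi^*$ on measures. Hyperbolic time: $n\ge1$ with $\prod_{j=n-k}^{n-1}L(f^jx)<e^{-ck}$ for $1\le k\le n$. $B(x,n,\delta)=\{y:d(f^jy,f^jx)\le\delta,0\le j\le n\}$, $S_n\phi=\sum_{j=0}^{n-1}\phi\circ f^j$. *)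

theory Defs
  imports "HOL-Analysis.Analysis" "HOL-Probability.Probability"
begin

definition preim :: "'a set \<Rightarrow> ('a \<Rightarrow> 'a) \<Rightarrow> nat \<Rightarrow> 'a \<Rightarrow> 'a set" where
  "preim M f n x = {y \<in> M. (f ^^ n) y = x}"

definition eln :: "nat \<Rightarrow> ereal" where
  "eln k = (if k = 0 then - \<infinity> else ereal (ln (real k)))"

definition deg_entropy :: "'a set \<Rightarrow> ('a \<Rightarrow> 'a) \<Rightarrow> ereal" where
  "deg_entropy M f =
     liminf (\<lambda>n. eln (INF x\<in>M. card (preim M f n x)) / ereal (real n))"

definition besicovitch_property :: "'a::metric_space set \<Rightarrow> bool" where
  "besicovitch_property M \<longleftrightarrow> (\<exists>N::nat. \<forall>A r. A \<subseteq> M \<and> (\<forall>a\<in>A. 0 < r a) \<and> bdd_above (r ` A) \<longrightarrow>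
      (\<exists>C\<subseteq>A. A \<subseteq> (\<Union>c\<in>C. cball c (r c)) \<and>
         (\<forall>x\<in>M. finite {c\<in>C. x \<in> cball c (r c)} \<and> card {c\<in>C. x \<in> cball c (r c)} \<le> N)))"

text \<open>Dimension m, read as a box-counting bound: M is covered by at most C r^(-m) balls of radius r.\<close>
definition has_dimension :: "'a::metric_space set \<Rightarrow> nat \<Rightarrow> bool" where
  "has_dimension M m \<longleftrightarrow> (\<exists>C>0. \<forall>r. 0 < r \<and> r \<le> 1 \<longrightarrow>
      (\<exists>F. finite F \<and> F \<subseteq> M \<and> M \<subseteq> (\<Union>z\<in>F. cball z r) \<and> real (card F) \<le> C * r powr (- real m)))"

definition local_homeo :: "'a::metric_space set \<Rightarrow> ('a \<Rightarrow> 'a) \<Rightarrow> bool" where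
  "local_homeo M f \<longleftrightarrow> f \<in> M \<rightarrow> M \<and> continuous_on M f \<and>
     (\<forall>x\<in>M. \<exists>U V g. openin (top_of_set M) U \<and> x \<in> U \<and> openin (top_of_set M) V \<and>
        homeomorphism U V f g)"

definition holder_on :: "'a::metric_space set \<Rightarrow> ('a \<Rightarrow> real) \<Rightarrow> bool" where
  "holder_on M \<phi> \<longleftrightarrow> (\<exists>C \<alpha>. 0 \<le> C \<and> 0 < \<alpha> \<and> \<alpha> \<le> 1 \<and>
      (\<forall>x\<in>M. \<forall>y\<in>M. \<bar>\<phi> x - \<phi> y\<bar> \<le> C * dist x y powr \<alpha>))"

definition dyn_ball :: "'a::metric_space set \<Rightarrow> ('a \<Rightarrow> 'a) \<Rightarrow> 'a \<Rightarrow> nat \<Rightarrow> real \<Rightarrow> 'a set" where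
  "dyn_ball M f x n \<delta> = {y \<in> M. \<forall>j\<le>n. dist ((f ^^ j) y) ((f ^^ j) x) \<le> \<delta>}"

definition birkhoff_sum :: "('a \<Rightarrow> 'a) \<Rightarrow> ('a \<Rightarrow> real) \<Rightarrow> nat \<Rightarrow> 'a \<Rightarrow> real" where
  "birkhoff_sum f \<phi> n y = (\<Sum>j<n. \<phi> ((f ^^ j) y))"

definition hyp_time :: "('a \<Rightarrow> 'a) \<Rightarrow> ('a \<Rightarrow> real) \<Rightarrow> real \<Rightarrow> 'a \<Rightarrow> nat \<Rightarrow> bool" where
  "hyp_time f Lf c x n \<longleftrightarrow> 1 \<le> n \<and>
     (\<forall>k\<in>{1..n}. (\<Prod>j\<in>{n-k..n-1}. Lf ((f ^^ j) x)) < exp (- c * real k))"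

definition transfer_op :: "'a set \<Rightarrow> ('a \<Rightarrow> 'a) \<Rightarrow> ('a \<Rightarrow> real) \<Rightarrow> ('a \<Rightarrow> real) \<Rightarrow> 'a \<Rightarrow> real" where
  "transfer_op M f \<phi> g x = (\<Sum>y\<in>preim M f 1 x. exp (\<phi> y) * g y)"

definition itin_set :: "nat \<Rightarrow> nat \<Rightarrow> real \<Rightarrow> nat \<Rightarrow> (nat \<Rightarrow> nat) set" where
  "itin_set k0 q \<gamma> n = {w \<in> PiE {..<n} (\<lambda>_. {1..k0}). real (card {j\<in>{..<n}. w j \<le> q}) > \<gamma> * real n}"

definition c_gamma :: "nat \<Rightarrow> nat \<Rightarrow> real \<Rightarrow> ereal" where
  "c_gamma k0 q \<gamma> = limsup (\<lambda>n. eln (card (itin_set k0 q \<gamma> n)) / ereal (real n))"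

definition msupp :: "'a::metric_space set \<Rightarrow> 'a measure \<Rightarrow> 'a set" where
  "msupp M \<nu> = {x \<in> M. \<forall>r>0. 0 < emeasure \<nu> (M \<inter> ball x r)}"

end

theory Submission imports Defs begin

(* The proof has
   three ingredients.
   (1) Jacobian estimate.  On a chart W, where f is a homeomorphism onto an open set,
       nu(f A) = lam * integral_A exp(-phi) dnu: first for open A (approximating the
       indicator of A by continuous cut-offs and using the eigen-identity), then for all
       measurable A by uniqueness of measures.  Gluing finitely many charts gives
       lam a nu(E) <= nu(f E) <= lam b nu(E) whenever f is injective on E and
       a <= exp(-phi) <= b there; iterating gives the analogue for f^n and S_n phi.
   (2) Support.  f maps supp nu into itself, and nu(cball w delta) is bounded below
       uniformly for w in supp nu (compactness).
   (3) Bounded distortion.  Along a hyperbolic time, backward contraction and Hoelder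
       continuity of phi bound the oscillation of S_n phi on B(x,n,delta) by a geometric
       series, independently of n. *)

lemma holder_on_continuous:
  assumes "holder_on M \<phi>" shows "continuous_on M \<phi>"
proof -
  obtain C \<alpha> where H: "0 \<le> C" "0 < \<alpha>" "\<forall>x\<in>M. \<forall>y\<in>M. \<bar>\<phi> x - \<phi> y\<bar> \<le> C * dist x y powr \<alpha>"
    using assms unfolding holder_on_def by blast
  show ?thesis unfolding continuous_on_iff
  proof (intro ballI allI impI)
    fix x e assume x: "x \<in> M" and e: "(0::real) < e"
    define d where "d = (e / (C + 1)) powr (1 / \<alpha>)"
    have d: "0 < d" unfolding d_def using e H by simp
    have dpow: "d powr \<alpha> = e / (C + 1)" unfolding d_def using e H by (simp add: powr_powr)
    show "\<exists>d>0. \<forall>x'\<in>M. dist x' x < d \<longrightarrow> dist (\<phi> x') (\<phi> x) < e"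
    proof (intro exI[of _ d] conjI d ballI impI)
      fix x' assume x': "x' \<in> M" "dist x' x < d"
      have "dist (\<phi> x') (\<phi> x) \<le> C * dist x' x powr \<alpha>" using H(3) x x' by (simp add: dist_real_def)
      also have "\<dots> \<le> C * d powr \<alpha>" using x' H by (intro mult_left_mono powr_mono2) auto
      also have "\<dots> = C * (e / (C + 1))" using dpow by simp
      also have "\<dots> < e" using e H by (simp add: field_simps)
      finally show "dist (\<phi> x') (\<phi> x) < e" .
    qed
  qed
qed

lemma continuous_cutoffs:
  fixes F :: "'a::metric_space set"
  assumes "closed F"
  shows "\<exists>hk :: nat \<Rightarrow> 'a \<Rightarrow> real. (\<forall>k. continuous_on UNIV (hk k)) \<and>
    (\<forall>k x. 0 \<le> hk k x \<and> hk k x \<le> 1) \<and> (\<forall>k. \<forall>x\<in>F. hk k x = 0) \<and>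
    (\<forall>x. (\<lambda>k. hk k x) \<longlonglongrightarrow> indicator (- F) x)"
proof -
  define d where "d x = (if F = {} then 1 else infdist x F)" for x
  define hk where "hk k x = min 1 (real k * d x)" for k x
  have d_nonneg: "0 \<le> d x" for x unfolding d_def by (simp add: infdist_nonneg)
  have d_pos: "0 < d x" if "x \<notin> F" for x
  proof (cases "F = {}")
    case False
    have "x \<notin> closure F" using closure_closed[OF assms] that by simp
    then have "infdist x F \<noteq> 0" using in_closure_iff_infdist_zero[OF False] by blast
    then show ?thesis using False infdist_nonneg[of x F] unfolding d_def by auto
  qed (simp add: d_def)
  have "continuous_on UNIV d"
    unfolding d_def by (cases "F = {}") (simp_all add: continuous_on_infdist continuous_on_id)
  then have "continuous_on UNIV (hk k)" for k unfolding hk_def by (intro continuous_intros)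
  moreover have "0 \<le> hk k x \<and> hk k x \<le> 1" for k x unfolding hk_def using d_nonneg[of x] by simp
  moreover have "hk k x = 0" if "x \<in> F" for k x using that unfolding hk_def d_def by auto
  moreover have "(\<lambda>k. hk k x) \<longlonglongrightarrow> indicator (- F) x" for x
  proof (rule tendsto_eventually)
    show "\<forall>\<^sub>F k in sequentially. hk k x = indicator (- F) x"
    proof (cases "x \<in> F")
      case False
      obtain N where N: "1 / d x < real N" using reals_Archimedean2 by blast
      have "hk k x = 1" if "N \<le> k" for k
      proof -
        have "1 / d x < real k" using N that by linarith
        then have "1 \<le> real k * d x" using d_pos[OF False] by (simp add: field_simps)
        then show ?thesis unfolding hk_def by simp
      qed
      then show ?thesis using False unfolding eventually_sequentially by auto
    qed (auto simp: hk_def d_def)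
  qed
  ultimately show ?thesis by blast
qed

lemma holder_geometric_bound:
  fixes C \<alpha> c r :: real
  assumes "0 \<le> C" "0 < \<alpha>" "0 < c" "0 \<le> r"
  shows "(\<Sum>i<n. C * (exp (- c * real (n - i) / 2) * r) powr \<alpha>)
           \<le> C * r powr \<alpha> / (1 - exp (- c * \<alpha> / 2))"
proof -
  define q where "q = exp (- c * \<alpha> / 2)"
  have q: "0 < q" "q < 1" unfolding q_def using assms by auto
  have term_eq: "C * (exp (- c * real (n - i) / 2) * r) powr \<alpha> = C * r powr \<alpha> * q ^ (n - i)" for i
  proof -
    have "(exp (- c * real (n - i) / 2) * r) powr \<alpha> = exp (- c * real (n - i) / 2) powr \<alpha> * r powr \<alpha>"
      using assms by (simp add: powr_mult)
    also have "exp (- c * real (n - i) / 2) powr \<alpha> = exp (real (n - i) * (- c * \<alpha> / 2))"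
      by (simp add: powr_def)
    finally show ?thesis unfolding q_def exp_of_nat_mult by simp
  qed
  have "(\<Sum>i<n. q ^ (n - i)) \<le> (\<Sum>i<n. q ^ (n - Suc i))"
    using q by (intro sum_mono) (simp add: Suc_diff_Suc power_le_one)
  also have "\<dots> = (\<Sum>i<n. q ^ i)" by (rule sum.nat_diff_reindex)
  also have "\<dots> = (1 - q ^ n) / (1 - q)" using q by (simp add: sum_gp_strict)
  also have "\<dots> \<le> 1 / (1 - q)" using q by (simp add: divide_right_mono)
  finally have "(\<Sum>i<n. q ^ (n - i)) \<le> 1 / (1 - q)" .
  then have "C * r powr \<alpha> * (\<Sum>i<n. q ^ (n - i)) \<le> C * r powr \<alpha> * (1 / (1 - q))"
    using assms by (intro mult_left_mono) auto
  then show ?thesis unfolding term_eq q_def by (simp add: sum_distrib_left)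
qed

lemma dyn_ball_distortion:
  assumes f_maps: "f \<in> M \<rightarrow> M"
    and holder: "\<forall>u\<in>M. \<forall>v\<in>M. \<bar>\<phi> u - \<phi> v\<bar> \<le> C * dist u v powr \<alpha>" "0 \<le> C" "0 < \<alpha>"
    and contraction: "\<forall>y\<in>dyn_ball M f x n \<delta>. \<forall>z\<in>dyn_ball M f x n \<delta>. \<forall>j\<in>{1..n}.
            dist ((f ^^ (n - j)) y) ((f ^^ (n - j)) z) \<le> exp (- c * real j / 2) * dist ((f ^^ n) y) ((f ^^ n) z)"
    and y: "y \<in> dyn_ball M f x n \<delta>" and z: "z \<in> dyn_ball M f x n \<delta>" and i: "i < n"
  shows "\<bar>\<phi> ((f ^^ i) z) - \<phi> ((f ^^ i) y)\<bar> \<le> C * (exp (- c * real (n - i) / 2) * (2 * \<delta>)) powr \<alpha>"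
proof -
  have orbit_M: "(f ^^ j) u \<in> M" if "u \<in> M" for u j
    using that f_maps by (induction j) auto
  have "dist ((f ^^ n) z) ((f ^^ n) x) \<le> \<delta>" "dist ((f ^^ n) y) ((f ^^ n) x) \<le> \<delta>"
    using y z unfolding dyn_ball_def by auto
  then have end_close: "dist ((f ^^ n) z) ((f ^^ n) y) \<le> 2 * \<delta>"
    using dist_triangle2[of "(f ^^ n) z" "(f ^^ n) y" "(f ^^ n) x"] by linarith
  have "dist ((f ^^ (n - (n - i))) z) ((f ^^ (n - (n - i))) y)
          \<le> exp (- c * real (n - i) / 2) * dist ((f ^^ n) z) ((f ^^ n) y)"
    using i by (intro contraction[rule_format, OF z y]) auto
  also have "\<dots> \<le> exp (- c * real (n - i) / 2) * (2 * \<delta>)"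
    using end_close by (intro mult_left_mono) auto
  finally have "dist ((f ^^ i) z) ((f ^^ i) y) powr \<alpha> \<le> (exp (- c * real (n - i) / 2) * (2 * \<delta>)) powr \<alpha>"
    using i holder(3) by (intro powr_mono2) auto
  moreover have "(f ^^ i) z \<in> M" "(f ^^ i) y \<in> M"
    using y z orbit_M unfolding dyn_ball_def by auto
  ultimately show ?thesis
    using holder(1,2) by (meson mult_left_mono order_trans)
qed

locale eigenmeasure =
  fixes M :: "'a::metric_space set" and f :: "'a \<Rightarrow> 'a" and \<phi> :: "'a \<Rightarrow> real"
    and lam :: real and \<nu> :: "'a measure"
  assumes M_compact: "compact M" and f_local_homeo: "local_homeo M f"
    and f_finite_fibres: "\<forall>x\<in>M. finite (preim M f 1 x)"
    and \<phi>_cont: "continuous_on M \<phi>" and lam_pos: "0 < lam"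
    and \<nu>_prob: "prob_space \<nu>" and \<nu>_sets: "sets \<nu> = sets (restrict_space borel M)"
    and \<nu>_eigen: "\<forall>g. continuous_on M g \<longrightarrow>
                   (\<integral>x. transfer_op M f \<phi> g x \<partial>\<nu>) = lam * (\<integral>x. g x \<partial>\<nu>)"
begin

sublocale nu: prob_space \<nu> by (rule \<nu>_prob)

lemma space_\<nu>: "space \<nu> = M"
  using sets_eq_imp_space_eq[OF \<nu>_sets] by (simp add: space_restrict_space)

lemma M_closed: "closed M"
  using M_compact compact_imp_closed by blast

lemma f_maps: "f \<in> M \<rightarrow> M" and f_cont: "continuous_on M f"
  using f_local_homeo unfolding local_homeo_def by auto

lemma openin_measurable: "openin (top_of_set M) U \<Longrightarrow> U \<in> sets \<nu>"
  unfolding \<nu>_sets sets_restrict_space openin_open by auto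

lemma closed_measurable: "closed C \<Longrightarrow> M \<inter> C \<in> sets \<nu>"
  unfolding \<nu>_sets sets_restrict_space by auto

lemma compact_measurable: "compact K \<Longrightarrow> K \<subseteq> M \<Longrightarrow> K \<in> sets \<nu>"
  using closed_measurable[OF compact_imp_closed] by (metis Int_absorb1)

lemma continuous_measurable: "continuous_on M u \<Longrightarrow> u \<in> borel_measurable \<nu>"
  using borel_measurable_continuous_on_restrict measurable_cong_sets[OF \<nu>_sets refl] by blast

lemma borel_measurable_\<nu>: "u \<in> borel_measurable borel \<Longrightarrow> u \<in> borel_measurable \<nu>"
  using measurable_restrict_space1 measurable_cong_sets[OF \<nu>_sets refl] by blast

text \<open>The sigma-algebra of nu is generated by the relatively open sets, an Int-stable family;
  this is what makes the uniqueness theorem for measures applicable.\<close>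
lemma sets_\<nu>_generated: "sets \<nu> = sigma_sets M ((\<inter>) M ` {S. open S})"
proof -
  have "M \<in> sigma_sets UNIV {S. open S}" using M_closed sets_borel by (metis borel_closed)
  then show ?thesis unfolding \<nu>_sets sets_restrict_space sets_borel
    using sigma_sets_Int[of M UNIV "{S. open S}"] by simp
qed

lemma relatively_open_Int_stable: "Int_stable ((\<inter>) M ` {S. open S})"
proof (rule Int_stableI)
  fix X Y assume "X \<in> (\<inter>) M ` {S. open S}" "Y \<in> (\<inter>) M ` {S. open S}"
  then obtain S T where "open S" "X = M \<inter> S" "open T" "Y = M \<inter> T" by auto
  then have "X \<inter> Y = M \<inter> (S \<inter> T)" "open (S \<inter> T)" by auto
  then show "X \<inter> Y \<in> (\<inter>) M ` {S. open S}" by blast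
qed

lemma \<phi>_bounded: obtains b where "\<forall>x\<in>M. \<bar>\<phi> x\<bar> \<le> b"
proof -
  have "bounded (\<phi> ` M)" by (rule compact_imp_bounded[OF compact_continuous_image[OF \<phi>_cont M_compact]])
  then show ?thesis using that unfolding bounded_iff by auto
qed

lemma integrable_indicator_exp:
  assumes "A \<in> sets \<nu>" shows "integrable \<nu> (\<lambda>x. indicator A x * exp (- \<phi> x))"
proof -
  obtain b where b: "\<forall>x\<in>M. \<bar>\<phi> x\<bar> \<le> b" using \<phi>_bounded by blast
  have "(\<lambda>x. exp (- \<phi> x)) \<in> borel_measurable \<nu>" by (intro continuous_measurable continuous_intros \<phi>_cont)
  moreover have "AE x in \<nu>. norm (indicator A x * exp (- \<phi> x)) \<le> exp b"
    using b by (intro AE_I2) (auto simp: space_\<nu> indicator_def)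
  ultimately show ?thesis using assms by (intro nu.integrable_const_bound[where B="exp b"]) auto
qed

lemma bounded_convergence:
  fixes u :: "nat \<Rightarrow> 'a \<Rightarrow> real" and v :: "'a \<Rightarrow> real"
  assumes "\<And>k. u k \<in> borel_measurable \<nu>" "v \<in> borel_measurable \<nu>"
    and "\<And>k x. x \<in> M \<Longrightarrow> \<bar>u k x\<bar> \<le> B" "\<And>x. x \<in> M \<Longrightarrow> (\<lambda>k. u k x) \<longlonglongrightarrow> v x"
  shows "(\<lambda>k. \<integral>x. u k x \<partial>\<nu>) \<longlonglongrightarrow> (\<integral>x. v x \<partial>\<nu>)"
  using assms by (intro integral_dominated_convergence[where w="\<lambda>_. B"]) (auto simp: space_\<nu> intro!: AE_I2)

definition cutoffs :: "'a set \<Rightarrow> (nat \<Rightarrow> 'a \<Rightarrow> real) \<Rightarrow> bool" where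
  "cutoffs U hk \<longleftrightarrow> (\<forall>k. continuous_on UNIV (hk k)) \<and> (\<forall>k x. 0 \<le> hk k x \<and> hk k x \<le> 1) \<and>
     (\<forall>k. \<forall>x\<in>M - U. hk k x = 0) \<and> (\<forall>x\<in>M. (\<lambda>k. hk k x) \<longlonglongrightarrow> indicator U x)"

lemma openin_cutoffs:
  assumes "openin (top_of_set M) U" shows "\<exists>hk. cutoffs U hk"
proof -
  obtain T where "open T" "U = M \<inter> T" using assms openin_open by blast
  then have "M - U = M \<inter> - T" by auto
  then have "closed (M - U)" using M_closed \<open>open T\<close> by (simp add: closed_Int open_closed)
  obtain hk :: "nat \<Rightarrow> 'a \<Rightarrow> real" where hk: "\<forall>k. continuous_on UNIV (hk k)"
      "\<forall>k x. 0 \<le> hk k x \<and> hk k x \<le> 1" "\<forall>k. \<forall>x\<in>M - U. hk k x = 0"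
    and lim: "\<forall>x. (\<lambda>k. hk k x) \<longlonglongrightarrow> indicator (- (M - U)) x"
    using continuous_cutoffs[OF \<open>closed (M - U)\<close>] by (elim exE conjE)
  have "(\<lambda>k. hk k x) \<longlonglongrightarrow> indicator U x" if "x \<in> M" for x
  proof -
    have "indicator (- (M - U)) x = (indicator U x :: real)" using that by (simp add: indicator_def)
    then show ?thesis using lim by metis
  qed
  with hk show ?thesis unfolding cutoffs_def by blast
qed

lemma cutoffs_density_limit:
  assumes "cutoffs U hk" "openin (top_of_set M) U"
  shows "(\<lambda>k. \<integral>x. exp (- \<phi> x) * hk k x \<partial>\<nu>) \<longlonglongrightarrow> (\<integral>x. indicator U x * exp (- \<phi> x) \<partial>\<nu>)"
proof -
  note hk = assms(1)[unfolded cutoffs_def]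
  obtain b where b: "\<forall>x\<in>M. \<bar>\<phi> x\<bar> \<le> b" using \<phi>_bounded by blast
  have "(\<lambda>x. exp (- \<phi> x) * hk k x) \<in> borel_measurable \<nu>" for k
    using hk continuous_on_subset[OF _ subset_UNIV]
    by (intro continuous_measurable continuous_intros \<phi>_cont) blast
  moreover have "(\<lambda>x. indicator U x * exp (- \<phi> x)) \<in> borel_measurable \<nu>"
    using integrable_indicator_exp[OF openin_measurable[OF assms(2)]] by blast
  moreover have "\<bar>exp (- \<phi> x) * hk k x\<bar> \<le> exp b" if "x \<in> M" for k x
  proof -
    have "exp (- \<phi> x) \<le> exp b" using b that by force
    moreover have "0 \<le> hk k x" "hk k x \<le> 1" using hk by auto
    then have "0 \<le> exp (- \<phi> x) * hk k x" "exp (- \<phi> x) * hk k x \<le> exp (- \<phi> x)"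
      by (simp_all add: mult_left_le)
    ultimately show ?thesis by linarith
  qed
  moreover have "(\<lambda>k. exp (- \<phi> x) * hk k x) \<longlonglongrightarrow> indicator U x * exp (- \<phi> x)" if "x \<in> M" for x
    using hk that tendsto_mult_left[of "\<lambda>k. hk k x" "indicator U x" sequentially "exp (- \<phi> x)"]
    by (simp add: mult.commute)
  ultimately show ?thesis by (rule bounded_convergence[where B="exp b"])
qed

definition jacobian_bounded :: "real \<Rightarrow> real \<Rightarrow> 'a set \<Rightarrow> bool" where
  "jacobian_bounded a b E \<longleftrightarrow> E \<in> sets \<nu> \<and> f ` E \<in> sets \<nu> \<and>
     lam * a * measure \<nu> E \<le> measure \<nu> (f ` E) \<and> measure \<nu> (f ` E) \<le> lam * b * measure \<nu> E"

text \<open>Local version of the eigen-identity: on a chart W, where f is a homeomorphism onto the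
  open set V with inverse g, the transfer operator of exp(-phi) h (h supported in W) is
  h composed with g, and so the eigen-identity gives a change-of-variables formula.\<close>
context
  fixes W V g
  assumes W_open: "openin (top_of_set M) W" and V_open: "openin (top_of_set M) V"
    and chart: "homeomorphism W V f g"
begin

lemma chart_subset: "W \<subseteq> M" "V \<subseteq> M"
  using W_open V_open openin_imp_subset by blast+

lemma chart_inverse: "\<forall>x\<in>W. g (f x) = x" "f ` W = V" "\<forall>y\<in>V. f (g y) = y" "g ` V = W"
  "continuous_on V g"
  using chart unfolding homeomorphism_def by auto

lemma transfer_op_chart:
  assumes h0: "\<forall>z\<in>M - W. h z = 0" and x: "x \<in> M"
  shows "transfer_op M f \<phi> (\<lambda>z. exp (- \<phi> z) * h z) x = indicator V x * h (g x)"
proof -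
  let ?S = "{y\<in>M. f y = x}"
  have fin: "finite ?S" using f_finite_fibres x unfolding preim_def by simp
  have vanish: "h y = 0" if "y \<in> ?S" "x \<notin> V \<or> y \<noteq> g x" for y
    using that h0 chart_inverse by force
  have "transfer_op M f \<phi> (\<lambda>z. exp (- \<phi> z) * h z) x = (\<Sum>y\<in>?S. h y)"
    unfolding transfer_op_def preim_def by (auto simp: exp_minus intro!: sum.cong)
  also have "\<dots> = indicator V x * h (g x)"
  proof (cases "x \<in> V")
    case True
    have gx: "g x \<in> ?S" using True chart_inverse chart_subset by auto
    have "(\<Sum>y\<in>?S. h y) = h (g x) + (\<Sum>y\<in>?S - {g x}. h y)" using sum.remove[OF fin gx] .
    also have "(\<Sum>y\<in>?S - {g x}. h y) = 0" using vanish by (intro sum.neutral) blast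
    finally show ?thesis using True by simp
  qed (use vanish in \<open>auto intro: sum.neutral\<close>)
  finally show ?thesis .
qed

lemma eigen_identity_chart:
  assumes "continuous_on M h" "\<forall>z\<in>M - W. h z = 0"
  shows "(\<integral>x. indicator V x * h (g x) \<partial>\<nu>) = lam * (\<integral>x. exp (- \<phi> x) * h x \<partial>\<nu>)"
proof -
  have "continuous_on M (\<lambda>z. exp (- \<phi> z) * h z)" by (intro continuous_intros \<phi>_cont assms(1))
  then have "(\<integral>x. transfer_op M f \<phi> (\<lambda>z. exp (- \<phi> z) * h z) x \<partial>\<nu>) = lam * (\<integral>x. exp (- \<phi> x) * h x \<partial>\<nu>)"
    using \<nu>_eigen by blast
  moreover have "(\<integral>x. indicator V x * h (g x) \<partial>\<nu>) = (\<integral>x. transfer_op M f \<phi> (\<lambda>z. exp (- \<phi> z) * h z) x \<partial>\<nu>)"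
    by (intro Bochner_Integration.integral_cong refl) (simp add: transfer_op_chart[OF assms(2)] space_\<nu>)
  ultimately show ?thesis by simp
qed

lemma chart_image_openin:
  assumes "openin (top_of_set M) U" "U \<subseteq> W" shows "openin (top_of_set M) (f ` U)"
proof -
  have "openin (top_of_set V) (f ` U)"
    using homeomorphism_imp_open_map[OF chart openin_subset_trans[OF assms chart_subset(1)]] .
  then show ?thesis using V_open openin_trans by blast
qed

lemma chart_image_indicator:
  assumes "U \<subseteq> W" shows "indicator V x * indicator U (g x) = (indicator (f ` U) x :: real)"
proof -
  have "x \<in> f ` U \<longleftrightarrow> x \<in> V \<and> g x \<in> U" using chart_inverse assms by (auto intro: image_eqI)
  then show ?thesis by (auto simp: indicator_def)
qed

lemma cutoffs_pullback_limit:
  assumes hk: "cutoffs U hk" and U: "openin (top_of_set M) U" "U \<subseteq> W"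
  shows "(\<lambda>k. \<integral>x. indicator V x * hk k (g x) \<partial>\<nu>) \<longlonglongrightarrow> (\<integral>x. indicator (f ` U) x \<partial>\<nu>)"
proof (rule bounded_convergence[where B=1])
  note hk' = hk[unfolded cutoffs_def]
  have "V \<in> sets borel" using V_open M_closed unfolding openin_open by auto
  moreover have "continuous_on V (\<lambda>x. hk k (g x))" for k
    using hk' by (intro continuous_on_compose2[OF _ chart_inverse(5)]) auto
  ultimately show "(\<lambda>x. indicator V x * hk k (g x)) \<in> borel_measurable \<nu>" for k
    using borel_measurable_continuous_on_indicator[of V "\<lambda>x. hk k (g x)"]
    by (intro borel_measurable_\<nu>) simp
  show "indicator (f ` U) \<in> borel_measurable \<nu>"
    using openin_measurable[OF chart_image_openin[OF U]] by simp
  show "\<bar>indicator V x * hk k (g x)\<bar> \<le> 1" for k x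
    using hk' by (simp add: indicator_def)
  show "(\<lambda>k. indicator V x * hk k (g x)) \<longlonglongrightarrow> indicator (f ` U) x" for x
  proof (cases "x \<in> V")
    case True
    then have "g x \<in> M" using chart_inverse chart_subset by auto
    then show ?thesis
      unfolding chart_image_indicator[OF U(2), of x, symmetric] using hk' by (intro tendsto_mult_left) auto
  qed (use chart_image_indicator[OF U(2), of x] in simp)
qed

text \<open>Jacobian formula on open subsets of a chart: nu(f U) = lam * integral_U exp(-phi).
  Apply the chart identity to cut-offs of U and pass to the limit on both sides.\<close>
lemma jacobian_open:
  assumes U: "openin (top_of_set M) U" "U \<subseteq> W"
  shows "f ` U \<in> sets \<nu>" "measure \<nu> (f ` U) = lam * (\<integral>x. indicator U x * exp (- \<phi> x) \<partial>\<nu>)"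
proof -
  show fU: "f ` U \<in> sets \<nu>" by (rule openin_measurable[OF chart_image_openin[OF U]])
  obtain hk where hk: "cutoffs U hk" using openin_cutoffs[OF U(1)] by blast
  have "continuous_on M (hk k)" "\<forall>z\<in>M - W. hk k z = 0" for k
    using hk U(2) continuous_on_subset[OF _ subset_UNIV] unfolding cutoffs_def by blast+
  then have "(\<integral>x. indicator V x * hk k (g x) \<partial>\<nu>) = lam * (\<integral>x. exp (- \<phi> x) * hk k x \<partial>\<nu>)" for k
    by (rule eigen_identity_chart)
  then have "(\<lambda>k. \<integral>x. indicator V x * hk k (g x) \<partial>\<nu>) \<longlonglongrightarrow> lam * (\<integral>x. indicator U x * exp (- \<phi> x) \<partial>\<nu>)"
    using cutoffs_density_limit[OF hk U(1)] by (simp add: tendsto_mult_left)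
  then have "(\<integral>x. indicator (f ` U) x \<partial>\<nu>) = lam * (\<integral>x. indicator U x * exp (- \<phi> x) \<partial>\<nu>)"
    using cutoffs_pullback_limit[OF hk U] LIMSEQ_unique by blast
  then show "measure \<nu> (f ` U) = lam * (\<integral>x. indicator U x * exp (- \<phi> x) \<partial>\<nu>)"
    using fU by (simp add: Int_absorb2 sets.sets_into_space)
qed

lemma chart_inverse_measurable: "g \<in> measurable (restrict_space \<nu> V) \<nu>"
proof -
  have "V \<in> sets borel" using V_open M_closed unfolding openin_open by auto
  have "g \<in> measurable (restrict_space borel V) (restrict_space borel M)"
    using borel_measurable_continuous_on_restrict[OF chart_inverse(5)] chart_inverse(4) chart_subset
    by (intro measurable_restrict_space2) (auto simp: space_restrict_space)
  moreover have "sets (restrict_space \<nu> V) = sets (restrict_space borel V)"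
  proof -
    have "sets (restrict_space \<nu> V) = sets (restrict_space (restrict_space borel M) V)"
      by (rule sets_restrict_space_cong[OF \<nu>_sets])
    also have "restrict_space (restrict_space borel M) V = restrict_space borel (M \<inter> V)"
      using M_closed \<open>V \<in> sets borel\<close> by (intro restrict_restrict_space) auto
    finally show ?thesis using chart_subset by (simp add: Int_absorb1)
  qed
  ultimately show ?thesis using measurable_cong_sets[OF _ \<nu>_sets[symmetric]] by blast
qed

lemma chart_image_eq_preimage: "f ` (X \<inter> W) = g -` X \<inter> V"
  using chart_inverse by (auto intro: image_eqI)

lemma chart_image_measurable:
  assumes A: "A \<in> sets \<nu>" "A \<subseteq> W" shows "f ` A \<in> sets \<nu>"
proof -
  have "g -` A \<inter> space (restrict_space \<nu> V) \<in> sets (restrict_space \<nu> V)"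
    using measurable_sets[OF chart_inverse_measurable A(1)] .
  moreover have "f ` A = g -` A \<inter> V" using chart_image_eq_preimage[of A] A(2) by (simp add: Int_absorb2)
  ultimately show ?thesis using sets_restrict_space_iff[of V \<nu>] openin_measurable[OF V_open] chart_subset
    by (simp add: space_restrict_space space_\<nu> Int_absorb2)
qed

text \<open>The two measures compared in the Jacobian formula: the push-forward of nu restricted to V
  under the inverse chart g, and the measure with density lam exp(-phi) on W.\<close>
definition chart_pushforward :: "'a measure" where
  "chart_pushforward = distr (restrict_space \<nu> V) \<nu> g"

definition chart_density :: "'a measure" where
  "chart_density = density \<nu> (\<lambda>x. ennreal (lam * indicator W x * exp (- \<phi> x)))"

lemma emeasure_chart_pushforward:
  assumes "X \<in> sets \<nu>" shows "emeasure chart_pushforward X = emeasure \<nu> (f ` (X \<inter> W))"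
proof -
  have "emeasure chart_pushforward X = emeasure (restrict_space \<nu> V) (g -` X \<inter> V)"
    unfolding chart_pushforward_def using emeasure_distr[OF chart_inverse_measurable assms] chart_subset
    by (simp add: space_restrict_space space_\<nu> Int_absorb2)
  also have "\<dots> = emeasure \<nu> (g -` X \<inter> V)"
    by (rule emeasure_restrict_space) (use openin_measurable[OF V_open] space_\<nu> chart_subset in auto)
  finally show ?thesis unfolding chart_image_eq_preimage .
qed

lemma emeasure_chart_density:
  assumes "X \<in> sets \<nu>"
  shows "emeasure chart_density X = ennreal (lam * (\<integral>x. indicator (X \<inter> W) x * exp (- \<phi> x) \<partial>\<nu>))"
proof -
  have XW: "X \<inter> W \<in> sets \<nu>" using assms openin_measurable[OF W_open] by auto
  have "(\<lambda>x. exp (- \<phi> x)) \<in> borel_measurable \<nu>" by (intro continuous_measurable continuous_intros \<phi>_cont)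
  then have "(\<lambda>x. ennreal (lam * indicator W x * exp (- \<phi> x))) \<in> borel_measurable \<nu>"
    using openin_measurable[OF W_open] by simp
  then have "emeasure chart_density X = (\<integral>\<^sup>+x. ennreal (lam * (indicator (X \<inter> W) x * exp (- \<phi> x))) \<partial>\<nu>)"
    unfolding chart_density_def using assms
    by (simp add: emeasure_density) (intro nn_integral_cong, auto simp: indicator_def)
  also have "\<dots> = ennreal (\<integral>x. lam * (indicator (X \<inter> W) x * exp (- \<phi> x)) \<partial>\<nu>)"
    using integrable_indicator_exp[OF XW] lam_pos by (intro nn_integral_eq_integral) auto
  finally show ?thesis by simp
qed

text \<open>The two measures agree: they are finite and coincide on the Int-stable generator of
  relatively open sets by jacobian_open.\<close>
lemma chart_pushforward_eq_density: "chart_pushforward = chart_density"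
proof (rule measure_eqI_generator_eq[where E="(\<inter>) M ` {S. open S}" and \<Omega>=M and A="\<lambda>i. M"])
  show "Int_stable ((\<inter>) M ` {S. open S})" by (rule relatively_open_Int_stable)
  show "sets chart_pushforward = sigma_sets M ((\<inter>) M ` {S. open S})"
    "sets chart_density = sigma_sets M ((\<inter>) M ` {S. open S})"
    unfolding chart_pushforward_def chart_density_def using sets_\<nu>_generated by simp_all
  show "emeasure chart_pushforward M \<noteq> \<infinity>"
    using emeasure_chart_pushforward[of M] sets.top[of \<nu>] space_\<nu> by simp
  fix X assume "X \<in> (\<inter>) M ` {S. open S}"
  then have X_open: "openin (top_of_set M) X" by (auto simp: openin_open_Int)
  then have "openin (top_of_set M) (X \<inter> W)" using W_open by (simp add: openin_Int)
  then show "emeasure chart_pushforward X = emeasure chart_density X"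
    unfolding emeasure_chart_pushforward[OF openin_measurable[OF X_open]]
      emeasure_chart_density[OF openin_measurable[OF X_open]]
    using jacobian_open nu.emeasure_eq_measure by auto
qed (auto intro!: image_eqI[where x=UNIV])

lemma jacobian_measurable:
  assumes A: "A \<in> sets \<nu>" "A \<subseteq> W"
  shows "measure \<nu> (f ` A) = lam * (\<integral>x. indicator A x * exp (- \<phi> x) \<partial>\<nu>)"
proof -
  have "emeasure \<nu> (f ` A) = ennreal (lam * (\<integral>x. indicator A x * exp (- \<phi> x) \<partial>\<nu>))"
    using emeasure_chart_pushforward[OF A(1)] emeasure_chart_density[OF A(1)] A(2)
    by (simp add: chart_pushforward_eq_density Int_absorb2)
  moreover have "0 \<le> lam * (\<integral>x. indicator A x * exp (- \<phi> x) \<partial>\<nu>)"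
    using lam_pos by (intro mult_nonneg_nonneg integral_nonneg) auto
  ultimately show ?thesis using nu.emeasure_eq_measure by simp
qed

lemma jacobian_bounds_chart:
  assumes A: "A \<in> sets \<nu>" "A \<subseteq> W" and ab: "\<forall>w\<in>A. a \<le> exp (- \<phi> w) \<and> exp (- \<phi> w) \<le> b"
  shows "jacobian_bounded a b A"
proof -
  have const_int: "(\<integral>x. indicator A x * c \<partial>\<nu>) = c * measure \<nu> A" for c :: real
    using A(1) by (simp add: Int_absorb2 sets.sets_into_space mult.commute)
  have const_integrable: "integrable \<nu> (\<lambda>x. indicator A x * c)" for c :: real
    using integrable_real_mult_indicator[OF A(1), of "\<lambda>_. c"] by (simp add: mult.commute)
  have "(\<integral>x. indicator A x * a \<partial>\<nu>) \<le> (\<integral>x. indicator A x * exp (- \<phi> x) \<partial>\<nu>)"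
    using ab by (intro integral_mono[OF const_integrable integrable_indicator_exp[OF A(1)]])
      (auto simp: indicator_def)
  then have "lam * a * measure \<nu> A \<le> measure \<nu> (f ` A)"
    unfolding jacobian_measurable[OF A] const_int using lam_pos by (simp add: mult.assoc)
  moreover have "(\<integral>x. indicator A x * exp (- \<phi> x) \<partial>\<nu>) \<le> (\<integral>x. indicator A x * b \<partial>\<nu>)"
    using ab by (intro integral_mono[OF integrable_indicator_exp[OF A(1)] const_integrable])
      (auto simp: indicator_def)
  then have "measure \<nu> (f ` A) \<le> lam * b * measure \<nu> A"
    unfolding jacobian_measurable[OF A] const_int using lam_pos by (simp add: mult.assoc)
  ultimately show ?thesis using A chart_image_measurable[OF A] unfolding jacobian_bounded_def by blast
qed

end

lemma jacobian_bounded_Un: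
  assumes "jacobian_bounded a b E1" "jacobian_bounded a b E2" "E1 \<inter> E2 = {}" "inj_on f (E1 \<union> E2)"
  shows "jacobian_bounded a b (E1 \<union> E2)"
proof -
  have "f ` E1 \<inter> f ` E2 = {}" using assms(3,4) by (auto dest: inj_onD)
  then have "measure \<nu> (f ` (E1 \<union> E2)) = measure \<nu> (f ` E1) + measure \<nu> (f ` E2)"
    using assms(1,2) nu.finite_measure_Union unfolding jacobian_bounded_def by (simp add: image_Un)
  moreover have "measure \<nu> (E1 \<union> E2) = measure \<nu> E1 + measure \<nu> E2"
    using assms(1-3) nu.finite_measure_Union unfolding jacobian_bounded_def by simp
  ultimately show ?thesis using assms(1,2) unfolding jacobian_bounded_def by (auto simp: distrib_left image_Un)
qed

text \<open>Global Jacobian bounds: cover the compact M by finitely many charts and cut an injectivity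
  domain E into disjoint pieces, each inside one chart.\<close>
lemma jacobian_bounds:
  assumes E: "E \<in> sets \<nu>" "inj_on f E" and ab: "\<forall>w\<in>E. a \<le> exp (- \<phi> w) \<and> exp (- \<phi> w) \<le> b"
  shows "jacobian_bounded a b E"
proof -
  obtain W V g where charts: "\<forall>x\<in>M. openin (top_of_set M) (W x) \<and> x \<in> W x \<and>
      openin (top_of_set M) (V x) \<and> homeomorphism (W x) (V x) f (g x)"
    using f_local_homeo unfolding local_homeo_def by metis
  have "\<forall>x\<in>M. \<exists>T. open T \<and> W x = M \<inter> T" using charts openin_open by metis
  then obtain T where T: "\<forall>x\<in>M. open (T x) \<and> W x = M \<inter> T x" by metis
  have "M \<subseteq> (\<Union>x\<in>M. T x)" using charts T by blast
  then obtain Z where Z: "Z \<subseteq> M" "finite Z" "M \<subseteq> (\<Union>x\<in>Z. T x)"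
    using compactE_image[OF M_compact, of M T] T by blast
  then have cover: "M \<subseteq> (\<Union>z\<in>Z. W z)" using T by blast
  have pieces: "jacobian_bounded a b D"
    if "finite Y" "Y \<subseteq> M" "D \<in> sets \<nu>" "D \<subseteq> E" "D \<subseteq> (\<Union>z\<in>Y. W z)" for D Y
    using that
  proof (induction Y arbitrary: D rule: finite_induct)
    case empty
    then show ?case by (simp add: jacobian_bounded_def)
  next
    case (insert z Y)
    define D1 where "D1 = D \<inter> W z"
    have z: "z \<in> M" using insert.prems(1) by simp
    have chart_z: "openin (top_of_set M) (W z)" "openin (top_of_set M) (V z)"
      "homeomorphism (W z) (V z) f (g z)" using charts z by auto
    have D1_meas: "D1 \<in> sets \<nu>"
      using insert.prems(2) openin_measurable[OF chart_z(1)] unfolding D1_def by blast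
    have "jacobian_bounded a b D1"
      by (rule jacobian_bounds_chart[OF chart_z D1_meas]) (use ab insert.prems(3) in \<open>auto simp: D1_def\<close>)
    moreover have "jacobian_bounded a b (D - W z)"
    proof (rule insert.IH)
      show "D - W z \<in> sets \<nu>" using insert.prems(2) openin_measurable[OF chart_z(1)] by blast
    qed (use insert.prems in blast)+
    moreover have "inj_on f D" using E(2) insert.prems(3) inj_on_subset by blast
    ultimately show ?case using jacobian_bounded_Un[of a b D1 "D - W z"] unfolding D1_def
      by (simp add: Int_Diff_Un Int_Diff_disjoint)
  qed
  have "E \<subseteq> M" using E(1) sets.sets_into_space space_\<nu> by blast
  then show ?thesis using pieces[OF Z(2,1) E(1) order_refl] cover by blast
qed

lemma jacobian_bounds_iterate:
  assumes E: "E \<in> sets \<nu>" "inj_on (f ^^ n) E"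
    and osc: "\<forall>i<n. \<forall>z\<in>E. \<bar>\<phi> ((f ^^ i) z) - \<phi> ((f ^^ i) y)\<bar> \<le> t i"
  shows "(f ^^ n) ` E \<in> sets \<nu> \<and>
    lam ^ n * exp (- birkhoff_sum f \<phi> n y - (\<Sum>i<n. t i)) * measure \<nu> E \<le> measure \<nu> ((f ^^ n) ` E) \<and>
    measure \<nu> ((f ^^ n) ` E) \<le> lam ^ n * exp (- birkhoff_sum f \<phi> n y + (\<Sum>i<n. t i)) * measure \<nu> E"
  using E(2) osc
proof (induction n)
  case 0
  then show ?case using E(1) by (simp add: birkhoff_sum_def)
next
  case (Suc n)
  let ?F = "(f ^^ n) ` E" and ?c = "\<phi> ((f ^^ n) y)"
  let ?S = "birkhoff_sum f \<phi> n y" and ?T = "\<Sum>i<n. t i"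
  have inj: "inj_on (f ^^ n) E" "inj_on f ?F"
    using Suc.prems(1) inj_on_imageI2 inj_on_imageI by (metis funpow.simps(2))+
  have IH: "?F \<in> sets \<nu>" "lam ^ n * exp (- ?S - ?T) * measure \<nu> E \<le> measure \<nu> ?F"
    "measure \<nu> ?F \<le> lam ^ n * exp (- ?S + ?T) * measure \<nu> E"
    using Suc.IH[OF inj(1)] Suc.prems(2) by auto
  have "\<forall>w\<in>?F. exp (- ?c - t n) \<le> exp (- \<phi> w) \<and> exp (- \<phi> w) \<le> exp (- ?c + t n)"
    using Suc.prems(2) by fastforce
  then have step: "jacobian_bounded (exp (- ?c - t n)) (exp (- ?c + t n)) ?F"
    using jacobian_bounds IH(1) inj(2) by blast
  have image: "(f ^^ Suc n) ` E = f ` ?F" by (simp add: image_comp)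
  have sum: "birkhoff_sum f \<phi> (Suc n) y = ?S + ?c" "(\<Sum>i<Suc n. t i) = ?T + t n"
    unfolding birkhoff_sum_def by simp_all
  have "lam ^ Suc n * exp (- birkhoff_sum f \<phi> (Suc n) y - (\<Sum>i<Suc n. t i)) * measure \<nu> E
      = (lam * exp (- ?c - t n)) * (lam ^ n * exp (- ?S - ?T) * measure \<nu> E)"
    unfolding sum by (simp add: exp_add[symmetric] algebra_simps)
  also have "\<dots> \<le> (lam * exp (- ?c - t n)) * measure \<nu> ?F"
    using IH(2) lam_pos by (intro mult_left_mono) auto
  also have "\<dots> \<le> measure \<nu> ((f ^^ Suc n) ` E)"
    using step image unfolding jacobian_bounded_def by simp
  finally have lower: "lam ^ Suc n * exp (- birkhoff_sum f \<phi> (Suc n) y - (\<Sum>i<Suc n. t i)) * measure \<nu> E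
      \<le> measure \<nu> ((f ^^ Suc n) ` E)" .
  have "measure \<nu> ((f ^^ Suc n) ` E) \<le> (lam * exp (- ?c + t n)) * measure \<nu> ?F"
    using step image unfolding jacobian_bounded_def by simp
  also have "\<dots> \<le> (lam * exp (- ?c + t n)) * (lam ^ n * exp (- ?S + ?T) * measure \<nu> E)"
    using IH(3) lam_pos by (intro mult_left_mono) auto
  also have "\<dots> = lam ^ Suc n * exp (- birkhoff_sum f \<phi> (Suc n) y + (\<Sum>i<Suc n. t i)) * measure \<nu> E"
    unfolding sum by (simp add: exp_add[symmetric] algebra_simps)
  finally show ?case using lower step image unfolding jacobian_bounded_def by simp
qed

lemma msupp_subset: "msupp M \<nu> \<subseteq> M"
  unfolding msupp_def by auto

lemma msupp_closed: "closed (msupp M \<nu>)"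
proof (rule closed_sequential_limits[THEN iffD2], intro allI impI, elim conjE)
  fix s l assume s: "\<forall>n. s n \<in> msupp M \<nu>" and lim: "s \<longlonglongrightarrow> l"
  have "l \<in> M" using closed_sequentially[OF M_closed _ lim] s msupp_subset by blast
  moreover have "0 < emeasure \<nu> (M \<inter> ball l r)" if r: "0 < r" for r
  proof -
    obtain n where n: "dist (s n) l < r / 2"
      using lim r unfolding tendsto_iff eventually_sequentially by (meson half_gt_zero order_refl)
    have "0 < emeasure \<nu> (M \<inter> ball (s n) (r / 2))" using s r unfolding msupp_def by auto
    also have "\<dots> \<le> emeasure \<nu> (M \<inter> ball l r)"
    proof (rule emeasure_mono)
      show "M \<inter> ball (s n) (r / 2) \<subseteq> M \<inter> ball l r"
        using n dist_triangle_half_r[of "s n" l r] by (auto simp: dist_commute)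
    qed (auto intro: openin_measurable simp: openin_open_Int)
    finally show ?thesis .
  qed
  ultimately show "l \<in> msupp M \<nu>" unfolding msupp_def by blast
qed

text \<open>The support is forward invariant: a small ball around x in the support is mapped
  injectively into any prescribed ball around f x, with Jacobian bounded below.\<close>
lemma msupp_forward_invariant:
  assumes x: "x \<in> msupp M \<nu>" shows "f x \<in> msupp M \<nu>"
proof -
  have xM: "x \<in> M" using x msupp_subset by blast
  obtain W V g where chart: "openin (top_of_set M) W" "x \<in> W" "openin (top_of_set M) V"
    "homeomorphism W V f g"
    using f_local_homeo xM unfolding local_homeo_def by blast
  obtain b where b: "\<forall>x\<in>M. \<bar>\<phi> x\<bar> \<le> b" using \<phi>_bounded by blast
  have "0 < emeasure \<nu> (M \<inter> ball (f x) r)" if r: "0 < r" for r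
  proof -
    obtain e where e: "0 < e" "M \<inter> ball x e \<subseteq> W"
      using chart(1,2) unfolding openin_contains_ball by blast
    obtain s where s: "0 < s" "\<forall>z\<in>M. dist z x < s \<longrightarrow> dist (f z) (f x) < r"
      using f_cont xM r unfolding continuous_on_iff by blast
    define E where "E = M \<inter> ball x (min e s)"
    have E_meas: "E \<in> sets \<nu>" unfolding E_def by (intro openin_measurable) (simp add: openin_open_Int)
    have "E \<subseteq> W" using e unfolding E_def by auto
    moreover have "\<forall>w\<in>E. exp (- b) \<le> exp (- \<phi> w) \<and> exp (- \<phi> w) \<le> exp b"
      using b unfolding E_def by force
    ultimately have jac: "jacobian_bounded (exp (- b)) (exp b) E"
      using jacobian_bounds_chart[OF chart(1,3,4) E_meas] by blast
    have "0 < emeasure \<nu> E" using x e s unfolding msupp_def E_def by simp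
    then have "0 < lam * exp (- b) * measure \<nu> E" using lam_pos nu.emeasure_eq_measure by simp
    also have "\<dots> \<le> measure \<nu> (f ` E)" using jac unfolding jacobian_bounded_def by blast
    also have "\<dots> \<le> measure \<nu> (M \<inter> ball (f x) r)"
      using s f_maps by (intro nu.finite_measure_mono openin_measurable)
        (auto simp: E_def openin_open_Int dist_commute)
    finally show ?thesis using nu.emeasure_eq_measure by simp
  qed
  then show ?thesis using f_maps xM unfolding msupp_def by auto
qed

lemma msupp_iterate: "x \<in> msupp M \<nu> \<Longrightarrow> (f ^^ n) x \<in> msupp M \<nu>"
  by (induction n) (auto intro: msupp_forward_invariant)

text \<open>Balls of a fixed radius centred in the support have uniformly positive mass (compactness).\<close>
lemma msupp_uniform_mass:
  assumes "0 < \<delta>"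
  obtains a where "0 < a" "a \<le> 1" "\<forall>w\<in>msupp M \<nu>. a \<le> measure \<nu> (M \<inter> cball w \<delta>)"
proof -
  have "compact (msupp M \<nu>)"
    using compact_Int_closed[OF M_compact msupp_closed] msupp_subset by (simp add: Int_absorb1)
  moreover have "msupp M \<nu> \<subseteq> (\<Union>z\<in>msupp M \<nu>. ball z (\<delta> / 2))" using assms by auto
  ultimately obtain Z where Z: "Z \<subseteq> msupp M \<nu>" "finite Z" "msupp M \<nu> \<subseteq> (\<Union>z\<in>Z. ball z (\<delta> / 2))"
    using compactE_image[of "msupp M \<nu>" "msupp M \<nu>" "\<lambda>z. ball z (\<delta> / 2)"] by auto
  define a where "a = Min (insert 1 ((\<lambda>z. measure \<nu> (M \<inter> ball z (\<delta> / 2))) ` Z))"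
  have "0 < measure \<nu> (M \<inter> ball z (\<delta> / 2))" if "z \<in> Z" for z
    using Z(1) that assms nu.emeasure_eq_measure unfolding msupp_def by fastforce
  then have "0 < a" unfolding a_def using Z(2) by simp
  moreover have "a \<le> 1" unfolding a_def using Z(2) by simp
  moreover have "a \<le> measure \<nu> (M \<inter> cball w \<delta>)" if w: "w \<in> msupp M \<nu>" for w
  proof -
    obtain z where z: "z \<in> Z" "dist z w < \<delta> / 2" using Z(3) w by auto
    have "a \<le> measure \<nu> (M \<inter> ball z (\<delta> / 2))" unfolding a_def using Z(2) z(1) by simp
    also have "\<dots> \<le> measure \<nu> (M \<inter> cball w \<delta>)"
    proof (rule nu.finite_measure_mono)
      show "M \<inter> ball z (\<delta> / 2) \<subseteq> M \<inter> cball w \<delta>"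
        using z(2) dist_triangle_half_r[of z w \<delta>] by (auto simp: dist_commute less_imp_le)
    qed (auto intro: closed_measurable)
    finally show ?thesis .
  qed
  ultimately show ?thesis using that by blast
qed

lemma homeomorphic_to_ball:
  assumes "homeomorphism B (M \<inter> cball w \<delta>) F G" "B \<subseteq> M"
  shows "B \<in> sets \<nu>" "inj_on F B" "F ` B = M \<inter> cball w \<delta>"
proof -
  have "compact B" using assms(1) compact_continuous_image[OF _ compact_Int_closed[OF M_compact closed_cball]]
    unfolding homeomorphism_def by metis
  then show "B \<in> sets \<nu>" using assms(2) by (rule compact_measurable)
  show "inj_on F B" "F ` B = M \<inter> cball w \<delta>"
    using assms(1) unfolding homeomorphism_def by (metis inj_on_inverseI, blast)
qed

lemma gibbs_bounds:
  assumes B: "B \<in> sets \<nu>" "inj_on (f ^^ n) B" "(f ^^ n) ` B = M \<inter> cball w \<delta>"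
    and mass: "0 < a" "a \<le> measure \<nu> (M \<inter> cball w \<delta>)"
    and osc: "\<forall>i<n. \<forall>z\<in>B. \<bar>\<phi> ((f ^^ i) z) - \<phi> ((f ^^ i) y)\<bar> \<le> t i" "(\<Sum>i<n. t i) \<le> D"
  shows "a * exp (- D) \<le> lam ^ n * exp (- birkhoff_sum f \<phi> n y) * measure \<nu> B"
    and "lam ^ n * exp (- birkhoff_sum f \<phi> n y) * measure \<nu> B \<le> exp D"
proof -
  define u where "u = lam ^ n * exp (- birkhoff_sum f \<phi> n y) * measure \<nu> B"
  define T where "T = (\<Sum>i<n. t i)"
  have image_bounds: "u * exp (- T) \<le> measure \<nu> ((f ^^ n) ` B)" "measure \<nu> ((f ^^ n) ` B) \<le> u * exp T"
    using jacobian_bounds_iterate[OF B(1,2) osc(1)]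
    unfolding u_def T_def by (simp_all add: exp_diff exp_add exp_minus field_simps)
  have "u * exp (- T) \<le> 1" using image_bounds(1) nu.prob_le_1 order_trans by blast
  then have "u \<le> exp T" by (simp add: exp_minus field_simps)
  also have "exp T \<le> exp D" using osc(2) unfolding T_def by simp
  finally show "u \<le> exp D" .
  have "a \<le> u * exp T" using mass(2) B(3) image_bounds(2) by simp
  then have "a * exp (- T) \<le> u" by (simp add: exp_minus field_simps)
  moreover have "a * exp (- D) \<le> a * exp (- T)" using osc(2) mass(1) unfolding T_def by simp
  ultimately show "a * exp (- D) \<le> u" by linarith
qed

end

text \<open>Rewriting the Gibbs bounds in the normalisation of the theorem: dividing by
  exp(-n log lam + s) is multiplying by lam^n exp(-s).\<close>
lemma gibbs_ratio_bounds:
  assumes lam: "0 < lam" and a: "0 < a" "a \<le> 1"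
    and lower: "a * exp (- D) \<le> lam ^ n * exp (- s) * m" and upper: "lam ^ n * exp (- s) * m \<le> exp D"
  shows "inverse (exp D / a) \<le> m / exp (- ln lam * real n + s)"
    and "m / exp (- ln lam * real n + s) \<le> exp D / a"
proof -
  have "exp (ln lam * real n) = exp (ln lam) ^ n" by (simp add: exp_of_nat_mult[symmetric] mult.commute)
  then have "exp (ln lam * real n) = lam ^ n" using lam by simp
  moreover have "exp (- ln lam * real n + s) = exp s / exp (ln lam * real n)"
    by (simp add: exp_diff[symmetric])
  ultimately have ratio: "m / exp (- ln lam * real n + s) = lam ^ n * exp (- s) * m"
    by (simp add: exp_minus field_simps)
  show "inverse (exp D / a) \<le> m / exp (- ln lam * real n + s)"
    unfolding ratio inverse_divide using lower by (simp add: exp_minus divide_inverse)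
  have "exp D \<le> exp D / a" using a by (simp add: le_divide_eq)
  then show "m / exp (- ln lam * real n + s) \<le> exp D / a" unfolding ratio using upper by linarith
qed

theorem lemma4p7:
  fixes M :: "'a::metric_space set" and f :: "'a \<Rightarrow> 'a" and Lf :: "'a \<Rightarrow> real"
    and \<phi> :: "'a \<Rightarrow> real" and m :: nat and h :: real
    and P :: "nat \<Rightarrow> 'a set" and k0 q :: nat and A :: "'a set"
    and \<epsilon>0 \<gamma> \<sigma> L c \<delta> lam :: real and \<nu> :: "'a measure"
  assumes M_compact: "compact M"
    and M_dim: "has_dimension M m"
    and M_besicovitch: "besicovitch_property M"
    and f_lh: "local_homeo M f"
    and f_fin: "\<forall>x\<in>M. finite (preim M f 1 x)"
    and f_closed: "\<forall>k::nat. closedin (top_of_set M) {x\<in>M. card (preim M f 1 x) = k}"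
    and Lf_pos: "\<forall>x\<in>M. 0 < Lf x"
    and Lf_bdd: "\<exists>B. \<forall>x\<in>M. Lf x \<le> B"
    and Lf_lip: "\<forall>x\<in>M. \<exists>U. openin (top_of_set M) U \<and> x \<in> U \<and> inj_on f U \<and>
                   (\<forall>y\<in>f ` U. \<forall>z\<in>f ` U. dist (inv_into U f y) (inv_into U f z) \<le> Lf x * dist y z)"
    and h_def: "deg_entropy M f = ereal h"
    and h_preim: "\<forall>x\<in>M. exp h \<le> real (card (preim M f 1 x))"
    and \<phi>_holder: "holder_on M \<phi>"
    and H2_cover: "(\<forall>i\<in>{1..k0}. P i \<subseteq> M \<and> inj_on f (P i)) \<and> M = (\<Union>i\<in>{1..k0}. P i)"
    and H2_A: "openin (top_of_set M) A \<and> A \<subseteq> (\<Union>i\<in>{1..q}. P i)"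
    and H2_q: "q \<le> k0" "real q < exp h"
    and P_cond: "ereal ((SUP x\<in>M. \<phi> x) - (INF x\<in>M. \<phi> x)) < ereal h - eln q"
    and eps0: "0 < \<epsilon>0"
      "ereal ((SUP x\<in>M. \<phi> x) - (INF x\<in>M. \<phi> x) + \<epsilon>0) < ereal h - eln q"
    and gamma: "0 < \<gamma>" "\<gamma> < 1" "c_gamma k0 q \<gamma> < eln q + ereal (\<epsilon>0 / 4)"
    and H1: "1 < \<sigma>" "0 < L" "0 < c"
      "\<forall>x\<in>A. Lf x \<le> L" "\<forall>x\<in>M - A. Lf x \<le> 1 / \<sigma>"
      "\<sigma> powr (- (1 - \<gamma>)) * L powr \<gamma> < exp (- 2 * c)" "exp (- 2 * c) < 1"
      "ereal ((SUP x\<in>M. \<phi> x) - (INF x\<in>M. \<phi> x))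
         < ereal h - eln q - ereal \<epsilon>0 - ereal (real m * ln L)"
    and delta: "0 < \<delta>"
      "\<forall>x\<in>M. \<forall>n. hyp_time f Lf c x n \<longrightarrow>
         (\<exists>g. homeomorphism (dyn_ball M f x n \<delta>) (M \<inter> cball ((f ^^ n) x) \<delta>) (f ^^ n) g) \<and>
         (\<forall>y\<in>dyn_ball M f x n \<delta>. \<forall>z\<in>dyn_ball M f x n \<delta>. \<forall>j\<in>{1..n}.
            dist ((f ^^ (n - j)) y) ((f ^^ (n - j)) z)
              \<le> exp (- c * real j / 2) * dist ((f ^^ n) y) ((f ^^ n) z))"
    and lambda: "exp (h + (INF x\<in>M. \<phi> x)) \<le> lam"
    and nu: "prob_space \<nu>" "sets \<nu> = sets (restrict_space borel M)"
      "\<forall>g. continuous_on M g \<longrightarrow>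
         (\<integral>x. transfer_op M f \<phi> g x \<partial>\<nu>) = lam * (\<integral>x. g x \<partial>\<nu>)"
  shows "\<exists>K>0. \<forall>x\<in>msupp M \<nu>. \<forall>n. hyp_time f Lf c x n \<longrightarrow>
           (\<forall>y\<in>dyn_ball M f x n \<delta>.
              inverse K \<le> measure \<nu> (dyn_ball M f x n \<delta>) / exp (- ln lam * real n + birkhoff_sum f \<phi> n y)
            \<and> measure \<nu> (dyn_ball M f x n \<delta>) / exp (- ln lam * real n + birkhoff_sum f \<phi> n y) \<le> K)"
proof -
  have lam_pos: "0 < lam" using lambda by (meson exp_gt_zero less_le_trans)
  interpret eigenmeasure M f \<phi> lam \<nu>
    by (rule eigenmeasure.intro[OF M_compact f_lh f_fin holder_on_continuous[OF \<phi>_holder] lam_pos nu])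
  obtain C \<alpha> where holder: "0 \<le> C" "0 < \<alpha>" "\<forall>u\<in>M. \<forall>v\<in>M. \<bar>\<phi> u - \<phi> v\<bar> \<le> C * dist u v powr \<alpha>"
    using \<phi>_holder unfolding holder_on_def by blast
  obtain a where a: "0 < a" "a \<le> 1" "\<forall>w\<in>msupp M \<nu>. a \<le> measure \<nu> (M \<inter> cball w \<delta>)"
    using msupp_uniform_mass[OF delta(1)] by blast
  define D where "D = C * (2 * \<delta>) powr \<alpha> / (1 - exp (- c * \<alpha> / 2))"
  show ?thesis
  proof (intro exI[of _ "exp D / a"] conjI ballI allI impI)
    fix x n y assume x: "x \<in> msupp M \<nu>" and hyp: "hyp_time f Lf c x n" and y: "y \<in> dyn_ball M f x n \<delta>"
    let ?B = "dyn_ball M f x n \<delta>"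
    obtain g where hom: "homeomorphism ?B (M \<inter> cball ((f ^^ n) x) \<delta>) (f ^^ n) g"
      and contraction: "\<forall>y\<in>?B. \<forall>z\<in>?B. \<forall>j\<in>{1..n}. dist ((f ^^ (n - j)) y) ((f ^^ (n - j)) z)
            \<le> exp (- c * real j / 2) * dist ((f ^^ n) y) ((f ^^ n) z)"
      using delta(2) x hyp msupp_subset by blast
    have "?B \<subseteq> M" by (auto simp: dyn_ball_def)
    note ball_image = homeomorphic_to_ball[OF hom this]
    have osc: "\<forall>i<n. \<forall>z\<in>?B. \<bar>\<phi> ((f ^^ i) z) - \<phi> ((f ^^ i) y)\<bar>
        \<le> C * (exp (- c * real (n - i) / 2) * (2 * \<delta>)) powr \<alpha>"
      using dyn_ball_distortion[OF f_maps holder(3,1,2) contraction y] by blast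
    have osc_sum: "(\<Sum>i<n. C * (exp (- c * real (n - i) / 2) * (2 * \<delta>)) powr \<alpha>) \<le> D"
      unfolding D_def using holder_geometric_bound[OF holder(1,2) H1(3)] delta(1) by simp
    have mass: "a \<le> measure \<nu> (M \<inter> cball ((f ^^ n) x) \<delta>)" using a(3) msupp_iterate[OF x] by blast
    note gibbs = gibbs_bounds[OF ball_image a(1) mass osc osc_sum]
    show "inverse (exp D / a) \<le> measure \<nu> ?B / exp (- ln lam * real n + birkhoff_sum f \<phi> n y)"
      and "measure \<nu> ?B / exp (- ln lam * real n + birkhoff_sum f \<phi> n y) \<le> exp D / a"
      by (fact gibbs_ratio_bounds[OF lam_pos a(1,2) gibbs])+
  qed (use a(1) in simp)
qed

end
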